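(* Fix an integer $\ell\geq 2$ and let $X$ be a random symmetric $2\times 2$ integer matrix whose upper-triangular entries $\{X_{i,j}:i\leq j\}$ have independent and uniformly distributed reductions to $\mathbb{Z}/\ell^2\mathbb{Z}$. Then $\mathbb{O}_2(\ell,\mathbb{Q})\neq\emptyset$ if and only if the factorization of $\ell$ into powers of distinct primes is of the form $\ell=p_1^{k_1}\cdots p_r^{k_r}$ with $p_i\equiv 1\bmod 4$ for every $i\leq r$. Moreover, if $\ell$ is of this form then $\#\mathbb{O}_2(\ell,\mathbb{Q})=2^{r+3}$ and consequently $$\mathbb{E}[N_2(\ell)]=\frac{2^{r+3}}{\ell^2}.$$
   Context: The level of a rational matrix $Q$ is the least integer $\ell\geq 1$ with $\ell Q$ having integer entries. $\mathbb{O}_n(\ell,\mathbb{Q})$ denotes the set of all rational orthogonal $n\times n$ matrices with level $\ell$. For an integer matrix $X\in\mathbb{Z}^{n\times n}$, $N_n(\ell)=\#\{Q\in\mathbb{O}_n(\ell,\mathbb{Q}): Q^{T}XQ\in\mathbb{Z}^{n\times n}\}$. *)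

theory Defs
  imports "HOL-Analysis.Analysis" "HOL-Computational_Algebra.Primes"
begin

definition is_int_mat :: "rat^'n^'m \<Rightarrow> bool" where
  "is_int_mat A \<longleftrightarrow> (\<forall>i j. A $ i $ j \<in> \<int>)"

definition mat_level :: "rat^'n^'m \<Rightarrow> nat" where
  "mat_level Q = (LEAST l::nat. l \<ge> 1 \<and> is_int_mat (\<chi> i j. of_nat l * Q $ i $ j))"

definition rat_orthogonal :: "rat^'n^'n \<Rightarrow> bool" where
  "rat_orthogonal Q \<longleftrightarrow> transpose Q ** Q = mat 1"

definition O2 :: "nat \<Rightarrow> (rat^2^2) set" where
  "O2 l = {Q. rat_orthogonal Q \<and> mat_level Q = l}"

definition int_to_rat_mat :: "int^'n^'m \<Rightarrow> rat^'n^'m" where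
  "int_to_rat_mat X = (\<chi> i j. of_int (X $ i $ j))"

definition N2 :: "nat \<Rightarrow> int^2^2 \<Rightarrow> nat" where
  "N2 l X = card {Q \<in> O2 l. is_int_mat (transpose Q ** int_to_rat_mat X ** Q)}"

definition sym2 :: "int \<Rightarrow> int \<Rightarrow> int \<Rightarrow> int^2^2" where
  "sym2 a b c = (\<chi> i j. if i = 1 \<and> j = 1 then a else if i = 2 \<and> j = 2 then c else b)"

text \<open>Expectation of N_2(l) when the upper-triangular entries of X have independent
  uniform reductions mod l^2: average over the representatives {0..<l^2}^3.\<close>
definition expected_N2 :: "nat \<Rightarrow> real" where
  "expected_N2 l =
     (\<Sum>a\<in>{0..<int l ^ 2}. \<Sum>b\<in>{0..<int l ^ 2}. \<Sum>c\<in>{0..<int l ^ 2}.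
        real (N2 l (sym2 a b c))) / real l ^ 6"

end

theory Submission
  imports Defs "HOL-Number_Theory.Number_Theory"
begin

text \<open>A rational orthogonal \<open>2 \<times> 2\<close> matrix is \<open>1/n\<close> times \<open>[[x, -e y], [y, e x]]\<close> with
  \<open>e = \<plusminus>1\<close>, \<open>x\<^sup>2 + y\<^sup>2 = n\<^sup>2\<close> and \<open>gcd x y = 1\<close>, and its level is exactly \<open>n\<close>. So
  \<open>#O\<^sub>2(l, \<rat>)\<close> is twice the number of primitive representations of \<open>l\<^sup>2\<close> as a sum of two squares.
  A primitive representation \<open>(x, y)\<close> of \<open>m\<close> determines the root \<open>t \<equiv> y / x\<close> of \<open>t\<^sup>2 \<equiv> -1 (mod m)\<close>;
  conversely, Thue's lemma produces a representation for every root, and two representations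
  with the same root differ by one of the four Gaussian units. Hence there are four times as many
  representations as roots, and by Hensel lifting and the Chinese remainder theorem the roots
  of \<open>-1\<close> modulo \<open>l\<^sup>2\<close> number \<open>2\<^sup>r\<close> when all prime factors of \<open>l\<close> are \<open>1 mod 4\<close>, and none otherwise.
  For the expectation, \<open>Q\<^sup>T X Q\<close> is integral iff \<open>l\<^sup>2\<close> divides the linear form \<open>x (A - C) + 2 y B\<close>
  of the entries of \<open>X\<close>; since \<open>x\<close> is invertible modulo \<open>l\<^sup>2\<close>, a fraction \<open>1/l\<^sup>2\<close> of all \<open>X\<close>
  satisfies this, so \<open>E[N\<^sub>2(l)] = #O\<^sub>2(l, \<rat>) / l\<^sup>2\<close>.\<close>

lemma double_counting:
  fixes R :: "'a \<Rightarrow> 'b \<Rightarrow> bool"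
  assumes "finite A" "finite B"
    and "\<And>a. a \<in> A \<Longrightarrow> card {b \<in> B. R a b} = j"
    and "\<And>b. b \<in> B \<Longrightarrow> card {a \<in> A. R a b} = k"
  shows "card A * j = card B * k"
proof -
  have "card A * j = (\<Sum>a\<in>A. \<Sum>b\<in>B. of_bool (R a b))"
    using assms(2,3) by (simp add: Collect_conj_eq Int_commute)
  also have "\<dots> = (\<Sum>b\<in>B. \<Sum>a\<in>A. of_bool (R a b))"
    by (rule sum.swap)
  also have "\<dots> = card B * k"
    using assms(1,4) by (simp add: Collect_conj_eq Int_commute)
  finally show ?thesis .
qed

section \<open>Square roots of \<open>-1\<close> modulo \<open>m\<close>\<close>

definition sqrts_minus_one :: "int \<Rightarrow> int set" where
  "sqrts_minus_one m = {t. 0 \<le> t \<and> t < m \<and> m dvd t\<^sup>2 + 1}"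

lemma finite_sqrts_minus_one [simp]: "finite (sqrts_minus_one m)"
  unfolding sqrts_minus_one_def by (rule finite_subset[of _ "{0..<m}"]) auto

lemma dvd_mod_square_plus_one_iff: "m dvd (t mod m)\<^sup>2 + 1 \<longleftrightarrow> m dvd t\<^sup>2 + (1::int)"
proof -
  have "[(t mod m)\<^sup>2 + 1 = t\<^sup>2 + 1] (mod m)"
    by (intro cong_add cong_pow) (auto simp: cong_def)
  then show ?thesis
    by (rule cong_dvd_iff)
qed

lemma mod_in_sqrts_minus_one:
  assumes "m > 0" "m dvd t\<^sup>2 + 1"
  shows "t mod m \<in> sqrts_minus_one m"
  using assms by (simp add: sqrts_minus_one_def dvd_mod_square_plus_one_iff)

lemma sqrts_minus_one_eq_mod_iff:
  assumes "s \<in> sqrts_minus_one m" "t \<in> sqrts_minus_one m"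
  shows "s = t \<longleftrightarrow> m dvd s - t"
  using assms by (auto simp: sqrts_minus_one_def mod_eq_dvd_iff[symmetric])

lemma sqrt_minus_one_mod_prime_iff:
  fixes p :: nat
  assumes "prime p" "odd p"
  shows "(\<exists>t::int. int p dvd t\<^sup>2 + 1) \<longleftrightarrow> p mod 4 = 1"
proof -
  have p2: "p > 2"
    using assms prime_ge_2_nat[of p] by (cases "p = 2") auto
  have "\<not> [-1 = 0] (mod int p)" "\<not> [-1 = 1] (mod int p)"
    using p2 by (auto simp: cong_iff_dvd_diff zdvd_not_zless)
  moreover have "[Legendre (-1) p = (-1) ^ ((p - 1) div 2)] (mod p)"
    using euler_criterion[OF assms(1) p2] by simp
  ultimately have "QuadRes p (-1) \<longleftrightarrow> even ((p - 1) div 2)"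
    unfolding Legendre_def
    by (cases "QuadRes p (-1)") (auto simp: minus_one_power_iff cong_sym_eq split: if_splits)
  also have "\<dots> \<longleftrightarrow> p mod 4 = 1"
    using assms(2) by presburger
  finally show ?thesis
    by (simp add: QuadRes_def cong_iff_dvd_diff)
qed

lemma not_four_dvd_square_plus_one: "\<not> 4 dvd (t::int)\<^sup>2 + 1"
proof -
  have "(t\<^sup>2 + 1) mod 4 = ((t mod 4)\<^sup>2 + 1) mod 4"
    by (metis mod_add_left_eq power_mod)
  moreover have "t mod 4 \<in> {0, 1, 2, 3}"
    by auto
  ultimately show ?thesis
    by (auto simp: power2_eq_square)
qed

lemma prime_dvd_square_plus_one_imp_coprime:
  fixes p t :: int
  assumes "prime p" "odd p" "p dvd t\<^sup>2 + 1"
  shows "coprime p (2 * t)"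
proof (rule prime_imp_coprime[OF assms(1)], rule notI)
  assume "p dvd 2 * t"
  moreover have "\<not> p dvd 2"
    using assms(1,2) zdvd_imp_le[of p 2] prime_gt_1_int[of p] by (cases "p = 2") auto
  moreover have "\<not> p dvd t"
  proof
    assume "p dvd t"
    then have "p dvd t\<^sup>2"
      by (simp add: power2_eq_square)
    then have "p dvd 1"
      using assms(3) dvd_add_right_iff by blast
    then show False
      using assms(1) not_prime_unit by blast
  qed
  ultimately show False
    using assms(1) prime_dvd_mult_iff by blast
qed

text \<open>Hensel lifting: with \<open>t\<^sup>2 + 1 = p\<^sup>j c\<close>, the lift \<open>t + s p\<^sup>j\<close> works as soon as
  \<open>c + 2 t s \<equiv> 0 (mod p)\<close>, which is solvable because \<open>2 t\<close> is invertible mod \<open>p\<close>.\<close>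
lemma sqrt_minus_one_lift:
  fixes p t :: int
  assumes "prime p" "odd p" "j \<ge> 1" "p ^ j dvd t\<^sup>2 + 1"
  shows "\<exists>t'. p ^ Suc j dvd t'\<^sup>2 + 1"
proof -
  obtain c where c: "t\<^sup>2 + 1 = p ^ j * c"
    using assms(4) by blast
  have "p dvd p ^ j"
    using assms(3) by simp
  then have "coprime (2 * t) p"
    using prime_dvd_square_plus_one_imp_coprime[OF assms(1,2)] assms(4)
    by (meson coprime_commute dvd_trans)
  then obtain u where u: "[2 * t * u = 1] (mod p)"
    using cong_solve_coprime_int by blast
  define s where "s = - c * u"
  have "c + 2 * t * s = c - c * (2 * t * u)"
    by (simp add: s_def algebra_simps)
  moreover have "[c - c * (2 * t * u) = c - c * 1] (mod p)"
    using u by (intro cong_diff cong_mult cong_refl)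
  ultimately obtain d where d: "c + 2 * t * s = p * d"
    by (auto simp: cong_0_iff)
  have "(t + s * p ^ j)\<^sup>2 + 1 = p ^ j * (c + 2 * t * s) + s\<^sup>2 * (p ^ j * p ^ j)"
    using c by (simp add: power2_eq_square algebra_simps)
  also have "\<dots> = p ^ Suc j * d + s\<^sup>2 * p ^ (j + j)"
    by (simp add: d power_add)
  also have "p ^ Suc j dvd \<dots>"
    using assms(3) by (intro dvd_add dvd_triv_left dvd_mult le_imp_power_dvd) simp
  finally show ?thesis ..
qed

lemma exists_sqrt_minus_one_mod_prime_power:
  fixes p :: nat
  assumes "prime p" "p mod 4 = 1"
  shows "\<exists>t::int. int p ^ k dvd t\<^sup>2 + 1"
proof (induction k)
  case (Suc k)
  have "odd p"
    using assms(2) by presburger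
  show ?case
  proof (cases "k = 0")
    case True
    then show ?thesis
      using sqrt_minus_one_mod_prime_iff[OF assms(1) \<open>odd p\<close>] assms(2) by simp
  next
    case False
    then show ?thesis
      using Suc.IH sqrt_minus_one_lift[of "int p" k] assms(1) \<open>odd p\<close> by auto
  qed
qed simp

lemma sqrt_minus_one_mod_prime_power_cases:
  fixes p t s :: int
  assumes "prime p" "odd p" "p ^ j dvd t\<^sup>2 + 1" "p ^ j dvd s\<^sup>2 + 1"
  shows "p ^ j dvd t - s \<or> p ^ j dvd t + s"
proof (cases "j = 0")
  case False
  have prod: "p ^ j dvd (t - s) * (t + s)"
    using dvd_diff[OF assms(3,4)] by (simp add: power2_eq_square algebra_simps)
  have "p dvd t\<^sup>2 + 1"
    using assms(3) False by (meson dvd_power dvd_trans not_gr0)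
  then have "coprime p (2 * t)"
    using prime_dvd_square_plus_one_imp_coprime[OF assms(1,2)] by blast
  then have "\<not> (p dvd t - s \<and> p dvd t + s)"
    using assms(1) coprime_common_divisor[of p "2 * t" p] not_prime_unit
    by (metis dvd_add dvd_refl mult_2 diff_add_cancel add_diff_eq add.commute)
  then consider "coprime (p ^ j) (t - s)" | "coprime (p ^ j) (t + s)"
    using assms(1) prime_imp_coprime coprime_power_left_iff by blast
  then show ?thesis
    using prod by cases (simp_all add: coprime_dvd_mult_left_iff coprime_dvd_mult_right_iff)
qed simp

lemma card_sqrts_minus_one_prime_power:
  fixes p :: nat
  assumes "prime p" "p mod 4 = 1" "j \<ge> 1"
  shows "card (sqrts_minus_one (int p ^ j)) = 2"
proof -
  define q m where "q = int p" and "m = q ^ j"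
  have q: "prime q" "odd q"
    unfolding q_def using assms(1,2) by simp_all presburger
  have "m > 1"
    unfolding m_def q_def using assms(1,3) prime_gt_1_nat by simp
  have "q dvd m"
    unfolding m_def using assms(3) by simp
  obtain t where t: "m dvd t\<^sup>2 + 1"
    unfolding m_def q_def using exists_sqrt_minus_one_mod_prime_power[OF assms(1,2)] by blast
  define t0 t1 where "t0 = t mod m" and "t1 = (- t) mod m"
  have t0: "t0 \<in> sqrts_minus_one m" and t1: "t1 \<in> sqrts_minus_one m"
    unfolding t0_def t1_def using \<open>m > 1\<close> t by (simp_all add: mod_in_sqrts_minus_one)
  have "s \<in> {t0, t1}" if s: "s \<in> sqrts_minus_one m" for s
  proof -
    have "m dvd s - t \<or> m dvd s - (- t)"
      using sqrt_minus_one_mod_prime_power_cases[OF q, of j s t] s t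
      unfolding m_def sqrts_minus_one_def by simp
    moreover have "m dvd s - t \<longleftrightarrow> m dvd s - t0" "m dvd s - (- t) \<longleftrightarrow> m dvd s - t1"
      unfolding t0_def t1_def mod_eq_dvd_iff[symmetric] by simp_all
    ultimately show ?thesis
      using s t0 t1 sqrts_minus_one_eq_mod_iff by blast
  qed
  moreover have "t0 \<noteq> t1"
  proof
    assume "t0 = t1"
    then have "m dvd t - (- t)"
      unfolding t0_def t1_def mod_eq_dvd_iff .
    then have "m dvd 2 * t"
      by (simp add: algebra_simps)
    then have "q dvd 2 * t"
      using \<open>q dvd m\<close> by (rule dvd_trans[rotated])
    moreover have "coprime q (2 * t)"
      by (rule prime_dvd_square_plus_one_imp_coprime[OF q dvd_trans[OF \<open>q dvd m\<close> t]])
    ultimately have "is_unit q"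
      by (intro coprime_common_divisor[of q "2 * t" q]) simp_all
    then show False
      using q(1) not_prime_unit by blast
  qed
  ultimately have "sqrts_minus_one m = {t0, t1}"
    using t0 t1 by blast
  then show ?thesis
    using \<open>t0 \<noteq> t1\<close> unfolding m_def q_def by simp
qed

lemma card_sqrts_minus_one_mult:
  fixes a b :: int
  assumes "a > 0" "b > 0" "coprime a b"
  shows "card (sqrts_minus_one (a * b)) = card (sqrts_minus_one a) * card (sqrts_minus_one b)"
proof -
  let ?f = "\<lambda>t. (t mod a, t mod b)"
  have "bij_betw ?f (sqrts_minus_one (a * b)) (sqrts_minus_one a \<times> sqrts_minus_one b)"
  proof (rule bij_betw_imageI)
    show "inj_on ?f (sqrts_minus_one (a * b))"
    proof (rule inj_onI)
      fix s t
      assume s: "s \<in> sqrts_minus_one (a * b)" and t: "t \<in> sqrts_minus_one (a * b)"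
        and "?f s = ?f t"
      then have "a dvd s - t" "b dvd s - t"
        by (simp_all add: mod_eq_dvd_iff)
      then have "a * b dvd s - t"
        using assms(3) by (rule divides_mult)
      then show "s = t"
        using sqrts_minus_one_eq_mod_iff[OF s t] by simp
    qed
    show "?f ` sqrts_minus_one (a * b) = sqrts_minus_one a \<times> sqrts_minus_one b"
    proof (intro equalityI subsetI)
      fix z
      assume "z \<in> ?f ` sqrts_minus_one (a * b)"
      then obtain t where t: "t \<in> sqrts_minus_one (a * b)" "z = ?f t"
        by blast
      then have "a dvd t\<^sup>2 + 1" "b dvd t\<^sup>2 + 1"
        unfolding sqrts_minus_one_def using dvd_mult_left dvd_mult_right by blast+
      then show "z \<in> sqrts_minus_one a \<times> sqrts_minus_one b"
        using assms(1,2) t(2) by (simp add: mod_in_sqrts_minus_one)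
    next
      fix z
      assume "z \<in> sqrts_minus_one a \<times> sqrts_minus_one b"
      then obtain u v where z: "z = (u, v)"
        and u: "u \<in> sqrts_minus_one a" and v: "v \<in> sqrts_minus_one b"
        by blast
      obtain x where "[x = u] (mod a)" "[x = v] (mod b)"
        using binary_chinese_remainder_int[OF assms(3)] by blast
      moreover define t where "t = x mod (a * b)"
      ultimately have tu: "t mod a = u" and tv: "t mod b = v"
        using u v unfolding sqrts_minus_one_def cong_def by (simp_all add: mod_mod_cancel)
      then have "a dvd t\<^sup>2 + 1" "b dvd t\<^sup>2 + 1"
        using u v dvd_mod_square_plus_one_iff unfolding sqrts_minus_one_def by blast+
      then have "t \<in> sqrts_minus_one (a * b)"
        using assms unfolding t_def sqrts_minus_one_def by (simp add: divides_mult)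
      then show "z \<in> ?f ` sqrts_minus_one (a * b)"
        unfolding z using tu tv by force
    qed
  qed
  then show ?thesis
    by (simp add: bij_betw_same_card card_cartesian_product)
qed

lemma card_sqrts_minus_one_prod_prime_powers:
  fixes A :: "nat set" and e :: "nat \<Rightarrow> nat"
  assumes "finite A" "\<And>p. p \<in> A \<Longrightarrow> prime p \<and> p mod 4 = 1 \<and> e p \<ge> 1"
  shows "card (sqrts_minus_one (int (\<Prod>p\<in>A. p ^ e p))) = 2 ^ card A"
  using assms
proof (induction A rule: finite_induct)
  case empty
  have "sqrts_minus_one 1 = {0}"
    by (auto simp: sqrts_minus_one_def)
  then show ?case
    by simp
next
  case (insert p A)
  have p: "prime p" "p mod 4 = 1" "e p \<ge> 1"
    using insert.prems by auto
  have "coprime p q" if "q \<in> A" for q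
    using that insert.hyps(2) insert.prems p(1) by (intro primes_coprime) auto
  then have "coprime (int (p ^ e p)) (int (\<Prod>q\<in>A. q ^ e q))"
    unfolding coprime_int_iff by (simp add: prod_coprime_right)
  moreover have "(\<Prod>q\<in>A. q ^ e q) > 0"
    using insert.prems by (simp add: prime_gt_0_nat prod_pos)
  ultimately have "card (sqrts_minus_one (int (p ^ e p) * int (\<Prod>q\<in>A. q ^ e q)))
      = card (sqrts_minus_one (int p ^ e p)) * card (sqrts_minus_one (int (\<Prod>q\<in>A. q ^ e q)))"
    using p(1) prime_gt_0_nat by (subst card_sqrts_minus_one_mult) (simp_all del: of_nat_prod)
  then show ?case
    using insert card_sqrts_minus_one_prime_power[OF p] by simp
qed

theorem card_sqrts_minus_one:
  fixes n :: nat
  assumes "n > 0" "\<forall>p\<in>prime_factors n. p mod 4 = 1"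
  shows "card (sqrts_minus_one (int n)) = 2 ^ card (prime_factors n)"
proof -
  have "n = (\<Prod>p\<in>prime_factors n. p ^ multiplicity p n)"
    using assms(1) by (rule prime_factorization_nat)
  moreover have "multiplicity p n \<ge> 1" if "p \<in> prime_factors n" for p
    using that prime_factors_multiplicity[of n] by auto
  ultimately show ?thesis
    using card_sqrts_minus_one_prod_prime_powers[of "prime_factors n" "\<lambda>p. multiplicity p n"]
      assms(2) by auto
qed

lemma prime_factors_mod_4_if_dvd_square_plus_one:
  fixes l :: nat and t :: int
  assumes "int l ^ 2 dvd t\<^sup>2 + 1"
  shows "\<forall>p\<in>prime_factors l. p mod 4 = 1"
proof
  fix p
  assume "p \<in> prime_factors l"
  then have p: "prime p" "p dvd l"
    by auto
  then have "int p ^ 2 dvd int l ^ 2"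
    by (simp add: dvd_power_same)
  then have "int p ^ 2 dvd t\<^sup>2 + 1"
    using assms by (rule dvd_trans)
  then have "p \<noteq> 2"
    using not_four_dvd_square_plus_one[of t] by auto
  then have "odd p"
    using p(1) prime_ge_2_nat[OF p(1)] by (intro prime_odd_nat) auto
  moreover have "int p dvd t\<^sup>2 + 1"
    using \<open>int p ^ 2 dvd t\<^sup>2 + 1\<close> by (rule dvd_trans[rotated]) simp
  ultimately show "p mod 4 = 1"
    using sqrt_minus_one_mod_prime_iff[OF p(1)] by blast
qed

lemma sqrts_minus_one_square_nonempty_iff:
  fixes l :: nat
  assumes "l > 0"
  shows "sqrts_minus_one (int l ^ 2) \<noteq> {} \<longleftrightarrow> (\<forall>p\<in>prime_factors l. p mod 4 = 1)"
proof
  assume "sqrts_minus_one (int l ^ 2) \<noteq> {}"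
  then obtain t where "int l ^ 2 dvd t\<^sup>2 + 1"
    unfolding sqrts_minus_one_def by blast
  then show "\<forall>p\<in>prime_factors l. p mod 4 = 1"
    by (rule prime_factors_mod_4_if_dvd_square_plus_one)
next
  assume "\<forall>p\<in>prime_factors l. p mod 4 = 1"
  then have "card (sqrts_minus_one (int (l ^ 2))) = 2 ^ card (prime_factors l)"
    using card_sqrts_minus_one[of "l ^ 2"] assms by (simp add: prime_factors_power)
  then show "sqrts_minus_one (int l ^ 2) \<noteq> {}"
    by auto
qed

section \<open>Primitive representations as a sum of two squares\<close>

definition prim_two_squares :: "int \<Rightarrow> (int \<times> int) set" where
  "prim_two_squares m = {(x, y). x\<^sup>2 + y\<^sup>2 = m \<and> coprime x y}"

lemma abs_le_square_int: "\<bar>x\<bar> \<le> (x::int)\<^sup>2"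
  using self_le_power[of "\<bar>x\<bar>" 2] by (cases "x = 0") auto

lemma finite_prim_two_squares [simp]: "finite (prim_two_squares m)"
proof (rule finite_subset)
  show "prim_two_squares m \<subseteq> {-m..m} \<times> {-m..m}"
  proof
    fix z
    assume "z \<in> prim_two_squares m"
    then obtain x y where z: "z = (x, y)" and m: "x\<^sup>2 + y\<^sup>2 = m"
      unfolding prim_two_squares_def by blast
    have "\<bar>x\<bar> \<le> x\<^sup>2" "\<bar>y\<bar> \<le> y\<^sup>2" "0 \<le> x\<^sup>2" "0 \<le> y\<^sup>2"
      by (simp_all add: abs_le_square_int)
    then show "z \<in> {-m..m} \<times> {-m..m}"
      unfolding z m[symmetric] by auto
  qed
qed simp

lemma coprime_sum_squares:
  fixes x y :: int
  assumes "coprime x y"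
  shows "coprime x (x\<^sup>2 + y\<^sup>2)"
proof -
  have "coprime x (y\<^sup>2)"
    using assms by simp
  moreover have "gcd x (x * x + y\<^sup>2) = gcd x (y\<^sup>2)"
    by (rule gcd_add_mult)
  ultimately show ?thesis
    by (simp add: coprime_iff_gcd_eq_1 power2_eq_square)
qed

text \<open>If \<open>x + t y = m X\<close> and \<open>y - t x = m Y\<close> with \<open>m = x\<^sup>2 + y\<^sup>2\<close>, then \<open>x X + y Y = 1\<close>.\<close>
lemma coprime_if_dvd_sum_squares:
  fixes x y t :: int
  assumes "x\<^sup>2 + y\<^sup>2 = m" "m \<noteq> 0" "m dvd y - t * x" "m dvd t\<^sup>2 + 1"
  shows "coprime x y"
proof (rule coprimeI)
  have "x + t * y = x * (t\<^sup>2 + 1) + t * (y - t * x)"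
    by (simp add: power2_eq_square algebra_simps)
  then have "m dvd x + t * y"
    using assms(3,4) by simp
  then obtain X where X: "x + t * y = m * X" ..
  obtain Y where Y: "y - t * x = m * Y"
    using assms(3) ..
  have "m * (x * X + y * Y) = x * (x + t * y) + y * (y - t * x)"
    by (simp add: X Y algebra_simps)
  also have "\<dots> = m"
    using assms(1) by (simp add: power2_eq_square algebra_simps)
  finally have bezout: "x * X + y * Y = 1"
    using assms(2) by simp
  fix c
  assume "c dvd x" "c dvd y"
  then have "c dvd x * X + y * Y"
    by simp
  then show "is_unit c"
    by (simp add: bezout)
qed

lemma card_sqrts_minus_one_of_prim_two_squares:
  assumes "(x, y) \<in> prim_two_squares m" "m > 0"
  shows "card {t \<in> sqrts_minus_one m. m dvd y - t * x} = 1"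
proof -
  have m: "x\<^sup>2 + y\<^sup>2 = m" and "coprime x y"
    using assms(1) unfolding prim_two_squares_def by auto
  then have cop: "coprime x m"
    using coprime_sum_squares by blast
  then obtain u where u: "[x * u = 1] (mod m)"
    using cong_solve_coprime_int by blast
  define t where "t = (y * u) mod m"
  have "[t = y * u] (mod m)"
    unfolding t_def cong_def by simp
  then have "[t * x = y * u * x] (mod m)"
    by (rule cong_mult[OF _ cong_refl])
  then have "[y - t * x = y - y * (x * u)] (mod m)"
    by (intro cong_diff cong_refl) (simp add: mult_ac)
  also have "[y - y * (x * u) = y - y * 1] (mod m)"
    using u by (intro cong_diff cong_mult cong_refl)
  finally have t_root: "m dvd y - t * x"
    by (simp add: cong_0_iff)
  have "x\<^sup>2 * (t\<^sup>2 + 1) = (t * x - y) * (t * x + y) + m"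
    using m by (simp add: power2_eq_square algebra_simps)
  moreover have "m dvd t * x - y"
    using t_root by (simp add: dvd_diff_commute)
  ultimately have "m dvd x\<^sup>2 * (t\<^sup>2 + 1)"
    by (simp add: dvd_add dvd_mult2)
  then have "t \<in> sqrts_minus_one m"
    using cop assms(2) unfolding t_def sqrts_minus_one_def
    by (simp add: coprime_commute coprime_dvd_mult_right_iff)
  moreover have "s = t" if "s \<in> sqrts_minus_one m" "m dvd y - s * x" for s
  proof -
    have "m dvd (y - s * x) - (y - t * x)"
      using that(2) t_root by (rule dvd_diff)
    then have "m dvd (t - s) * x"
      by (simp add: algebra_simps)
    then have "m dvd s - t"
      using cop by (simp add: coprime_commute coprime_dvd_mult_left_iff dvd_diff_commute)
    then show "s = t"
      using sqrts_minus_one_eq_mod_iff that(1) \<open>t \<in> sqrts_minus_one m\<close> by blast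
  qed
  ultimately have "{t \<in> sqrts_minus_one m. m dvd y - t * x} = {t}"
    using t_root by blast
  then show ?thesis
    by simp
qed

lemma thue_lemma:
  fixes m a b t :: int
  assumes "0 \<le> a" "0 \<le> b" "0 < m" "m < (a + 1) * (b + 1)"
  shows "\<exists>u v. (u \<noteq> 0 \<or> v \<noteq> 0) \<and> \<bar>u\<bar> \<le> a \<and> \<bar>v\<bar> \<le> b \<and> m dvd u - t * v"
proof -
  define D where "D = {0..a} \<times> {0..b}"
  define g where "g = (\<lambda>(u, v). (u - t * v) mod m)"
  have "g ` D \<subseteq> {0..<m}"
    using assms(3) unfolding g_def by auto
  moreover have "card {0..<m} < card D"
    using assms unfolding D_def by (simp add: card_cartesian_product nat_mult_distrib[symmetric])
  ultimately have "\<not> inj_on g D"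
    using card_inj_on_le[of g D "{0..<m}"] by (auto simp del: card_atLeastLessThan_int)
  then obtain u1 v1 u2 v2 where "(u1, v1) \<in> D" "(u2, v2) \<in> D" "(u1, v1) \<noteq> (u2, v2)"
    and "g (u1, v1) = g (u2, v2)"
    unfolding inj_on_def by auto
  moreover have "(u1 - t * v1) - (u2 - t * v2) = (u1 - u2) - t * (v1 - v2)"
    by (simp add: algebra_simps)
  ultimately have "(u1 - u2 \<noteq> 0 \<or> v1 - v2 \<noteq> 0) \<and> \<bar>u1 - u2\<bar> \<le> a \<and> \<bar>v1 - v2\<bar> \<le> b
      \<and> m dvd (u1 - u2) - t * (v1 - v2)"
    unfolding D_def g_def by (auto simp: mod_eq_dvd_iff)
  then show ?thesis
    by blast
qed

text \<open>Thue's lemma in the box \<open>\<bar>u\<bar> \<le> L\<close>, \<open>\<bar>v\<bar> \<le> L - 1\<close> gives \<open>0 < u\<^sup>2 + v\<^sup>2 < 2 L\<^sup>2\<close>; as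
  \<open>L\<^sup>2\<close> divides \<open>u\<^sup>2 + v\<^sup>2\<close>, this forces \<open>u\<^sup>2 + v\<^sup>2 = L\<^sup>2\<close>.\<close>
lemma exists_prim_two_squares_of_sqrt_minus_one:
  fixes L t :: int
  assumes "L > 0" "t \<in> sqrts_minus_one (L\<^sup>2)"
  shows "\<exists>x y. (x, y) \<in> prim_two_squares (L\<^sup>2) \<and> L\<^sup>2 dvd y - t * x"
proof -
  obtain u v where uv: "u \<noteq> 0 \<or> v \<noteq> 0" "\<bar>u\<bar> \<le> L" "\<bar>v\<bar> \<le> L - 1" "L\<^sup>2 dvd u - t * v"
    using thue_lemma[of L "L - 1" "L\<^sup>2" t] assms(1) by (auto simp: power2_eq_square)
  have t: "L\<^sup>2 dvd t\<^sup>2 + 1"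
    using assms(2) by (simp add: sqrts_minus_one_def)
  have "u\<^sup>2 + v\<^sup>2 = (u - t * v) * (u + t * v) + v\<^sup>2 * (t\<^sup>2 + 1)"
    by (simp add: power2_eq_square algebra_simps)
  then have "L\<^sup>2 dvd u\<^sup>2 + v\<^sup>2"
    using uv(4) t by (simp add: dvd_add dvd_mult dvd_mult2)
  then obtain k where k: "u\<^sup>2 + v\<^sup>2 = L\<^sup>2 * k" ..
  have "u\<^sup>2 \<le> L\<^sup>2" "v\<^sup>2 \<le> (L - 1)\<^sup>2"
    using uv(2,3) assms(1) by (simp_all add: abs_le_square_iff[symmetric])
  moreover have "(L - 1)\<^sup>2 = L\<^sup>2 - 2 * L + 1"
    by (simp add: power2_diff)
  ultimately have "u\<^sup>2 + v\<^sup>2 < L\<^sup>2 * 2"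
    using assms(1) by linarith
  moreover have "0 < u\<^sup>2 + v\<^sup>2"
    using uv(1) by (simp add: sum_power2_gt_zero_iff)
  ultimately have "0 < L\<^sup>2 * k" "L\<^sup>2 * k < L\<^sup>2 * 2"
    unfolding k by simp_all
  then have "k = 1"
    using assms(1) by (simp add: zero_less_mult_iff mult_less_cancel_left)
  then have "v\<^sup>2 + u\<^sup>2 = L\<^sup>2"
    using k by simp
  moreover have "coprime v u"
    using coprime_if_dvd_sum_squares[OF calculation _ uv(4) t] assms(1) by simp
  ultimately show ?thesis
    using uv(4) unfolding prim_two_squares_def by blast
qed

lemma sum_squares_eq_one_cases:
  fixes a b :: int
  assumes "a\<^sup>2 + b\<^sup>2 = 1"
  shows "(a, b) \<in> {(1, 0), (0, 1), (-1, 0), (0, -1)}"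
proof -
  have "\<bar>a\<bar> \<le> 1" "\<bar>b\<bar> \<le> 1"
    using assms abs_le_square_int[of a] abs_le_square_int[of b] zero_le_power2[of a]
      zero_le_power2[of b] by linarith+
  then have "a \<in> {-1, 0, 1}" "b \<in> {-1, 0, 1}"
    by auto
  then show ?thesis
    using assms by auto
qed

text \<open>Two primitive representations \<open>(x, y)\<close>, \<open>(x', y')\<close> attached to the same root differ by a
  unit \<open>a + b i\<close> of the Gaussian integers: \<open>m (a, b)\<close> is \<open>(x x' + y y', x' y - x y')\<close>.\<close>
lemma prim_two_squares_same_sqrt:
  fixes m t :: int
  assumes "(x, y) \<in> prim_two_squares m" "(x', y') \<in> prim_two_squares m" "m > 0"
    and "m dvd t\<^sup>2 + 1" "m dvd y - t * x" "m dvd y' - t * x'"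
  shows "(x', y') \<in> {(x, y), (y, -x), (-x, -y), (-y, x)}"
proof -
  have m: "x\<^sup>2 + y\<^sup>2 = m" and m': "x'\<^sup>2 + y'\<^sup>2 = m"
    using assms(1,2) unfolding prim_two_squares_def by auto
  have "x * x' + y * y' = x * x' * (t\<^sup>2 + 1) + y * (y' - t * x') + t * x' * (y - t * x)"
    by (simp add: power2_eq_square algebra_simps)
  then have "m dvd x * x' + y * y'"
    using assms(4-6) by (simp add: dvd_add dvd_mult)
  then obtain a where a: "x * x' + y * y' = m * a" ..
  have "x' * y - x * y' = x' * (y - t * x) - x * (y' - t * x')"
    by (simp add: algebra_simps)
  then have "m dvd x' * y - x * y'"
    using assms(5,6) by (simp add: dvd_diff dvd_mult)
  then obtain b where b: "x' * y - x * y' = m * b" ..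
  have "(m * a)\<^sup>2 + (m * b)\<^sup>2 = (x\<^sup>2 + y\<^sup>2) * (x'\<^sup>2 + y'\<^sup>2)"
    unfolding a[symmetric] b[symmetric] by (simp add: power2_eq_square algebra_simps)
  then have "m\<^sup>2 * (a\<^sup>2 + b\<^sup>2) = m\<^sup>2 * 1"
    unfolding m m' by (simp add: power2_eq_square algebra_simps)
  then have "a\<^sup>2 + b\<^sup>2 = 1"
    using assms(3) by simp
  moreover have "x * (m * a) + y * (m * b) = (x\<^sup>2 + y\<^sup>2) * x'"
    "y * (m * a) - x * (m * b) = (x\<^sup>2 + y\<^sup>2) * y'"
    unfolding a[symmetric] b[symmetric] by (simp_all add: power2_eq_square algebra_simps)
  then have "m * x' = m * (a * x + b * y)" "m * y' = m * (a * y - b * x)"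
    unfolding m by (simp_all add: algebra_simps)
  then have "x' = a * x + b * y" "y' = a * y - b * x"
    using assms(3) by simp_all
  ultimately show ?thesis
    using sum_squares_eq_one_cases[of a b] by auto
qed

lemma prim_two_squares_rotations:
  fixes m t :: int
  assumes "(x, y) \<in> prim_two_squares m" "m dvd t\<^sup>2 + 1" "m dvd y - t * x"
  shows "{(x, y), (y, -x), (-x, -y), (-y, x)} \<subseteq> {p \<in> prim_two_squares m. m dvd snd p - t * fst p}"
proof -
  have "x + t * y = x * (t\<^sup>2 + 1) + t * (y - t * x)"
    by (simp add: power2_eq_square algebra_simps)
  then have "m dvd x + t * y"
    using assms(2,3) by simp
  have "- x - t * y = - (x + t * y)" "- y - t * (- x) = - (y - t * x)"
    by simp_all
  then have "m dvd - x - t * y" "m dvd - y - t * (- x)"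
    using \<open>m dvd x + t * y\<close> assms(3) by (simp_all only: dvd_minus_iff)
  moreover have "m dvd x - t * (- y)"
    using \<open>m dvd x + t * y\<close> by simp
  moreover have "x\<^sup>2 + y\<^sup>2 = m" "coprime x y"
    using assms(1) by (simp_all add: prim_two_squares_def)
  then have "(y, -x) \<in> prim_two_squares m" "(-x, -y) \<in> prim_two_squares m"
    "(-y, x) \<in> prim_two_squares m"
    by (simp_all add: prim_two_squares_def add.commute coprime_commute)
  ultimately show ?thesis
    using assms(1,3) by simp
qed

lemma card_rotations:
  fixes x y :: int
  assumes "x \<noteq> 0 \<or> y \<noteq> 0"
  shows "card {(x, y), (y, -x), (-x, -y), (-y, x)} = 4"
proof -
  have n1: "(-x, -y) \<notin> {(-y, x)}" and n2: "(y, -x) \<notin> {(-x, -y), (-y, x)}"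
    and n3: "(x, y) \<notin> {(y, -x), (-x, -y), (-y, x)}"
    using assms by auto
  have "card {(-x, -y), (-y, x)} = 2"
    using card_insert_disjoint[OF _ n1] by simp
  then have "card {(y, -x), (-x, -y), (-y, x)} = 3"
    using card_insert_disjoint[OF _ n2] by simp
  then show ?thesis
    using card_insert_disjoint[OF _ n3] by simp
qed

lemma prim_two_squares_with_sqrt_minus_one:
  fixes m t :: int
  assumes "(x, y) \<in> prim_two_squares m" "m > 0" "m dvd t\<^sup>2 + 1" "m dvd y - t * x"
  shows "{p \<in> prim_two_squares m. m dvd snd p - t * fst p} = {(x, y), (y, -x), (-x, -y), (-y, x)}"
proof (intro equalityI subsetI)
  fix p
  assume "p \<in> {p \<in> prim_two_squares m. m dvd snd p - t * fst p}"
  then show "p \<in> {(x, y), (y, -x), (-x, -y), (-y, x)}"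
    using prim_two_squares_same_sqrt[OF assms(1) _ assms(2-4), of "fst p" "snd p"] by simp
next
  fix p
  assume "p \<in> {(x, y), (y, -x), (-x, -y), (-y, x)}"
  then show "p \<in> {p \<in> prim_two_squares m. m dvd snd p - t * fst p}"
    using prim_two_squares_rotations[OF assms(1,3,4)] by blast
qed

theorem card_prim_two_squares_square:
  fixes L :: int
  assumes "L > 0"
  shows "card (prim_two_squares (L\<^sup>2)) = 4 * card (sqrts_minus_one (L\<^sup>2))"
proof -
  define m where "m = L\<^sup>2"
  have "m > 0"
    unfolding m_def using assms by simp
  have "card {p \<in> prim_two_squares m. m dvd snd p - t * fst p} = 4"
    if t: "t \<in> sqrts_minus_one m" for t
  proof -
    have "m dvd t\<^sup>2 + 1"
      using t by (simp add: sqrts_minus_one_def)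
    obtain x y where xy: "(x, y) \<in> prim_two_squares m" "m dvd y - t * x"
      using exists_prim_two_squares_of_sqrt_minus_one[OF assms] t unfolding m_def by blast
    then have "{p \<in> prim_two_squares m. m dvd snd p - t * fst p}
        = {(x, y), (y, -x), (-x, -y), (-y, x)}"
      using prim_two_squares_with_sqrt_minus_one \<open>m > 0\<close> \<open>m dvd t\<^sup>2 + 1\<close> by blast
    moreover have "x \<noteq> 0 \<or> y \<noteq> 0"
      using xy(1) \<open>m > 0\<close> by (auto simp: prim_two_squares_def)
    ultimately show ?thesis
      by (simp add: card_rotations)
  qed
  moreover have "card {t \<in> sqrts_minus_one m. m dvd snd p - t * fst p} = 1"
    if "p \<in> prim_two_squares m" for p
    using card_sqrts_minus_one_of_prim_two_squares[of "fst p" "snd p"] that \<open>m > 0\<close> by simp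
  ultimately show ?thesis
    using double_counting[of "prim_two_squares m" "sqrts_minus_one m"
        "\<lambda>p t. m dvd snd p - t * fst p" 1 4]
    unfolding m_def by simp
qed

section \<open>Rational orthogonal \<open>2 \<times> 2\<close> matrices and their level\<close>

definition orth_mat2 :: "rat \<Rightarrow> rat \<Rightarrow> rat \<Rightarrow> rat^2^2" where
  "orth_mat2 a b e =
    (\<chi> i j. if j = 1 then (if i = 1 then a else b) else (if i = 1 then - e * b else e * a))"

lemma orth_mat2_nth [simp]:
  "orth_mat2 a b e $ 1 $ 1 = a" "orth_mat2 a b e $ 2 $ 1 = b"
  "orth_mat2 a b e $ 1 $ 2 = - e * b" "orth_mat2 a b e $ 2 $ 2 = e * a"
  unfolding orth_mat2_def by simp_all

lemma mat2_eq_iff: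
  "(A::'a^2^2) = B \<longleftrightarrow> A$1$1 = B$1$1 \<and> A$1$2 = B$1$2 \<and> A$2$1 = B$2$1 \<and> A$2$2 = B$2$2"
  by (auto simp: vec_eq_iff forall_2)

lemma rat_orthogonal_2_iff:
  "rat_orthogonal (Q::rat^2^2) \<longleftrightarrow>
     (Q$1$1)\<^sup>2 + (Q$2$1)\<^sup>2 = 1 \<and> (Q$1$2)\<^sup>2 + (Q$2$2)\<^sup>2 = 1 \<and> Q$1$1 * Q$1$2 + Q$2$1 * Q$2$2 = 0"
  unfolding rat_orthogonal_def mat2_eq_iff
  by (simp add: matrix_matrix_mult_def transpose_def mat_def sum_2 power2_eq_square mult.commute
      conj_comms)

lemma rat_orthogonal_orth_mat2:
  assumes "a\<^sup>2 + b\<^sup>2 = 1" "e \<in> {1, -1}"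
  shows "rat_orthogonal (orth_mat2 a b e)"
  using assms unfolding rat_orthogonal_2_iff by (auto simp: power2_eq_square algebra_simps)

text \<open>The sign is \<open>e = det Q\<close>.\<close>
lemma rat_orthogonal_2_cases:
  assumes "rat_orthogonal Q"
  obtains e where "e \<in> {1, -1}" "Q = orth_mat2 (Q$1$1) (Q$2$1) e"
proof -
  define a b c d where "a = Q$1$1" and "b = Q$2$1" and "c = Q$1$2" and "d = Q$2$2"
  have h1: "a\<^sup>2 + b\<^sup>2 = 1" and h2: "c\<^sup>2 + d\<^sup>2 = 1" and h3: "a * c + b * d = 0"
    using assms unfolding rat_orthogonal_2_iff a_def b_def c_def d_def by auto
  define e where "e = a * d - b * c"
  have "c = c * (a\<^sup>2 + b\<^sup>2)"
    using h1 by simp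
  also have "\<dots> = - e * b + a * (a * c + b * d)"
    unfolding e_def by (simp add: power2_eq_square algebra_simps)
  finally have ce: "c = - e * b"
    using h3 by simp
  have "d = d * (a\<^sup>2 + b\<^sup>2)"
    using h1 by simp
  also have "\<dots> = e * a + b * (a * c + b * d)"
    unfolding e_def by (simp add: power2_eq_square algebra_simps)
  finally have de: "d = e * a"
    using h3 by simp
  have "e\<^sup>2 * (a\<^sup>2 + b\<^sup>2) = c\<^sup>2 + d\<^sup>2"
    using ce de by (simp add: power2_eq_square algebra_simps)
  then have "e \<in> {1, -1}"
    using h1 h2 by (simp add: power2_eq_1_iff)
  moreover have "Q = orth_mat2 a b e"
    unfolding mat2_eq_iff using ce de unfolding a_def b_def c_def d_def by simp
  ultimately show thesis
    using that unfolding a_def b_def by blast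
qed

lemma mat_level_orth_mat2:
  assumes "e \<in> {1, -1}"
  shows "mat_level (orth_mat2 a b e) = (LEAST l::nat. l \<ge> 1 \<and> of_nat l * a \<in> \<int> \<and> of_nat l * b \<in> \<int>)"
proof -
  have "is_int_mat (\<chi> i j. of_nat l * orth_mat2 a b e $ i $ j)
      \<longleftrightarrow> of_nat l * a \<in> \<int> \<and> of_nat l * b \<in> \<int>" for l :: nat
    using assms unfolding is_int_mat_def by (auto simp: forall_2)
  then show ?thesis
    unfolding mat_level_def by simp
qed

lemma rational_point_unit_circle:
  fixes a b :: rat
  assumes "a\<^sup>2 + b\<^sup>2 = 1"
  obtains x y and n :: nat where "n > 0" "(x, y) \<in> prim_two_squares (int n ^ 2)"
    "a = of_int x / of_nat n" "b = of_int y / of_nat n"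
proof -
  obtain p q r s where pq: "quotient_of a = (p, q)" and rs: "quotient_of b = (r, s)"
    by (metis surj_pair)
  have "q > 0" "s > 0"
    using pq rs by (simp_all add: quotient_of_denom_pos)
  define d X Y where "d = q * s" and "X = p * s" and "Y = r * q"
  have "d > 0"
    unfolding d_def using \<open>q > 0\<close> \<open>s > 0\<close> by simp
  have ab: "a = of_int X / of_int d" "b = of_int Y / of_int d"
    using quotient_of_div[OF pq] quotient_of_div[OF rs] \<open>q > 0\<close> \<open>s > 0\<close>
    unfolding d_def X_def Y_def by simp_all
  then have "of_int X = a * of_int d" "of_int Y = b * of_int d"
    using \<open>d > 0\<close> by simp_all
  then have "(of_int (X\<^sup>2 + Y\<^sup>2) :: rat) = of_int (d\<^sup>2) * (a\<^sup>2 + b\<^sup>2)"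
    by (simp add: power_mult_distrib algebra_simps)
  then have "(of_int (X\<^sup>2 + Y\<^sup>2) :: rat) = of_int (d\<^sup>2)"
    using assms by simp
  then have XY: "X\<^sup>2 + Y\<^sup>2 = d\<^sup>2"
    by (simp only: of_int_eq_iff)
  define g where "g = gcd X Y"
  have "g \<noteq> 0"
    using XY \<open>d > 0\<close> unfolding g_def by auto
  then have "g > 0"
    unfolding g_def by (simp add: order_neq_le_trans)
  obtain x y where xy: "X = x * g" "Y = y * g" "coprime x y"
    using gcd_coprime_exists[OF \<open>g \<noteq> 0\<close>[unfolded g_def]] unfolding g_def by blast
  have sq: "g\<^sup>2 * (x\<^sup>2 + y\<^sup>2) = d\<^sup>2"
    using XY unfolding xy by (simp add: power_mult_distrib algebra_simps)
  then have "g dvd d"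
    by (metis dvd_triv_left pow_divides_pow_iff zero_less_numeral)
  then obtain n' where n': "d = g * n'" ..
  have "n' > 0"
    using \<open>d > 0\<close> \<open>g > 0\<close> n' by (simp add: zero_less_mult_iff)
  have "x\<^sup>2 + y\<^sup>2 = n'\<^sup>2"
    using sq \<open>g > 0\<close> unfolding n' by (simp add: power_mult_distrib)
  moreover have "a = of_int x / of_int n'" "b = of_int y / of_int n'"
    using ab \<open>g > 0\<close> unfolding xy n' by simp_all
  ultimately show thesis
    using that[of "nat n'" x y] \<open>n' > 0\<close> xy(3) by (simp add: prim_two_squares_def)
qed

definition orth_of_rep :: "nat \<Rightarrow> int \<Rightarrow> int \<Rightarrow> rat \<Rightarrow> rat^2^2" where
  "orth_of_rep l x y e = orth_mat2 (of_int x / of_nat l) (of_int y / of_nat l) e"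

lemma mat_level_orth_of_rep:
  assumes "coprime x y" "l \<ge> 1" "e \<in> {1, -1}"
  shows "mat_level (orth_of_rep l x y e) = l"
  unfolding orth_of_rep_def mat_level_orth_mat2[OF assms(3)]
proof (rule Least_equality, goal_cases)
  case 1
  show ?case
    using assms(2) by simp
next
  case (2 k)
  have "of_nat k * (of_int z / of_nat l) = (of_int (int k * z) / of_int (int l) :: rat)" for z
    by simp
  then have "int l dvd int k * x" "int l dvd int k * y"
    using 2 assms(2) by (simp_all only: of_int_div_of_int_in_Ints_iff) simp_all
  then have "int l dvd gcd (int k * x) (int k * y)"
    by simp
  also have "gcd (int k * x) (int k * y) = int k"
    using assms(1) by (simp add: gcd_mult_left)
  finally show "l \<le> k"
    using 2 by (simp add: dvd_imp_le)
qed

lemma orth_of_rep_in_O2: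
  assumes "(x, y) \<in> prim_two_squares (int l ^ 2)" "l \<ge> 1" "e \<in> {1, -1}"
  shows "orth_of_rep l x y e \<in> O2 l"
proof -
  have "x\<^sup>2 + y\<^sup>2 = int l ^ 2" "coprime x y"
    using assms(1) unfolding prim_two_squares_def by simp_all
  have "(of_int x / of_nat l :: rat)\<^sup>2 + (of_int y / of_nat l)\<^sup>2
      = of_int (x\<^sup>2 + y\<^sup>2) / (of_nat l)\<^sup>2"
    by (simp add: power_divide add_divide_distrib)
  also have "\<dots> = 1"
    using \<open>x\<^sup>2 + y\<^sup>2 = int l ^ 2\<close> assms(2) by simp
  finally have "(of_int x / of_nat l :: rat)\<^sup>2 + (of_int y / of_nat l)\<^sup>2 = 1" .
  then show ?thesis
    using rat_orthogonal_orth_mat2 mat_level_orth_of_rep \<open>coprime x y\<close> assms(2,3)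
    unfolding O2_def orth_of_rep_def by simp
qed

lemma orth_of_rep_inj:
  assumes "(x, y) \<in> prim_two_squares (int l ^ 2)" "l \<ge> 1"
    and "orth_of_rep l x y e = orth_of_rep l x' y' e'"
  shows "x = x' \<and> y = y' \<and> e = e'"
proof -
  have eqs: "(of_int x / of_nat l :: rat) = of_int x' / of_nat l"
    "(of_int y / of_nat l :: rat) = of_int y' / of_nat l"
    "e * (of_int x / of_nat l) = e' * (of_int x' / of_nat l)"
    "e * (of_int y / of_nat l) = e' * (of_int y' / of_nat l)"
    using assms(3) unfolding orth_of_rep_def mat2_eq_iff by simp_all
  then have "x = x'" "y = y'"
    using assms(2) by simp_all
  moreover have "x \<noteq> 0 \<or> y \<noteq> 0"
    using assms(1,2) unfolding prim_two_squares_def by auto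
  ultimately show ?thesis
    using eqs assms(2) by auto
qed

lemma bij_betw_orth_of_rep:
  assumes "l \<ge> 1"
  shows "bij_betw (\<lambda>((x, y), e). orth_of_rep l x y e)
    (prim_two_squares (int l ^ 2) \<times> {1, -1}) (O2 l)"
proof (rule bij_betw_imageI)
  show "inj_on (\<lambda>((x, y), e). orth_of_rep l x y e) (prim_two_squares (int l ^ 2) \<times> {1, -1})"
  proof (rule inj_onI)
    fix p q
    assume "p \<in> prim_two_squares (int l ^ 2) \<times> {1, -1}"
      and "(\<lambda>((x, y), e). orth_of_rep l x y e) p = (\<lambda>((x, y), e). orth_of_rep l x y e) q"
    moreover obtain x y e x' y' e' where "p = ((x, y), e)" "q = ((x', y'), e')"
      by (metis prod.collapse)
    ultimately show "p = q"
      using orth_of_rep_inj[of x y l e x' y' e'] assms by simp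
  qed
  show "(\<lambda>((x, y), e). orth_of_rep l x y e) ` (prim_two_squares (int l ^ 2) \<times> {1, -1}) = O2 l"
  proof (intro equalityI subsetI)
    fix Q
    assume "Q \<in> O2 l"
    then have "rat_orthogonal Q" "mat_level Q = l"
      unfolding O2_def by simp_all
    then obtain e where e: "e \<in> {1, -1}" and Q: "Q = orth_mat2 (Q$1$1) (Q$2$1) e"
      using rat_orthogonal_2_cases by blast
    have "(Q$1$1)\<^sup>2 + (Q$2$1)\<^sup>2 = 1"
      using \<open>rat_orthogonal Q\<close> by (simp add: rat_orthogonal_2_iff)
    then obtain x y n where n: "n > 0" "(x, y) \<in> prim_two_squares (int n ^ 2)"
      and "Q$1$1 = of_int x / of_nat n" "Q$2$1 = of_int y / of_nat n"
      by (rule rational_point_unit_circle)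
    then have "Q = orth_of_rep n x y e"
      using Q unfolding orth_of_rep_def by simp
    moreover have "n = l"
      using mat_level_orth_of_rep[of x y n e] n e \<open>mat_level Q = l\<close> calculation
      unfolding prim_two_squares_def by simp
    ultimately show "Q \<in> (\<lambda>((x, y), e). orth_of_rep l x y e)
        ` (prim_two_squares (int l ^ 2) \<times> {1, -1})"
      using n(2) e by force
  qed (use orth_of_rep_in_O2 assms in auto)
qed

lemma finite_O2: "l \<ge> 1 \<Longrightarrow> finite (O2 l)"
  using bij_betw_finite[OF bij_betw_orth_of_rep] by simp

lemma card_O2:
  assumes "l \<ge> 1"
  shows "card (O2 l) = 8 * card (sqrts_minus_one (int l ^ 2))"
proof -
  have "card (O2 l) = card (prim_two_squares (int l ^ 2) \<times> {1, -1 :: rat})"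
    using bij_betw_same_card[OF bij_betw_orth_of_rep[OF assms]] by simp
  also have "\<dots> = 2 * card (prim_two_squares (int l ^ 2))"
    by (simp add: card_cartesian_product)
  also have "\<dots> = 8 * card (sqrts_minus_one (int l ^ 2))"
    using card_prim_two_squares_square[of "int l"] assms by simp
  finally show ?thesis .
qed

section \<open>The expected value of \<open>N\<^sub>2(l)\<close>\<close>

lemma congruence_orth_mat2_sym2_nth:
  fixes a b e :: rat and A B C :: int
  defines "P \<equiv> transpose (orth_mat2 a b e) ** int_to_rat_mat (sym2 A B C) ** orth_mat2 a b e"
  shows "P$1$1 = a\<^sup>2 * of_int A + 2 * a * b * of_int B + b\<^sup>2 * of_int C"
    "P$1$2 = e * (- a * b * of_int A + (a\<^sup>2 - b\<^sup>2) * of_int B + a * b * of_int C)"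
    "P$2$1 = e * (- a * b * of_int A + (a\<^sup>2 - b\<^sup>2) * of_int B + a * b * of_int C)"
    "P$2$2 = e\<^sup>2 * (b\<^sup>2 * of_int A - 2 * a * b * of_int B + a\<^sup>2 * of_int C)"
  unfolding P_def
  by (simp_all add: matrix_matrix_mult_def transpose_def int_to_rat_mat_def sym2_def sum_2
      algebra_simps power2_eq_square)

text \<open>With \<open>K = x (A - C) + 2 y B\<close> and \<open>M = l\<^sup>2 = x\<^sup>2 + y\<^sup>2\<close>, the entries of \<open>Q\<^sup>T X Q\<close> are
  \<open>C + x K / M\<close>, \<open>e (B - y K / M)\<close> (twice) and \<open>A - x K / M\<close>.\<close>
lemma is_int_mat_congruence_orth_of_rep_iff:
  assumes "(x, y) \<in> prim_two_squares (int l ^ 2)" "l \<ge> 1" "e \<in> {1, -1}"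
  shows "is_int_mat
      (transpose (orth_of_rep l x y e) ** int_to_rat_mat (sym2 A B C) ** orth_of_rep l x y e)
    \<longleftrightarrow> int l ^ 2 dvd x * (A - C) + 2 * y * B"
proof -
  define M K where "M = int l ^ 2" and "K = x * (A - C) + 2 * y * B"
  define a b r where "a = (of_int x / of_nat l :: rat)" and "b = (of_int y / of_nat l :: rat)"
    and "r = inverse (of_int M :: rat)"
  define P where "P = transpose (orth_mat2 a b e) ** int_to_rat_mat (sym2 A B C) ** orth_mat2 a b e"
  have M: "x\<^sup>2 + y\<^sup>2 = M" and "M \<noteq> 0"
    using assms(1,2) unfolding prim_two_squares_def M_def by simp_all
  have "coprime (x\<^sup>2 + y\<^sup>2) x"
    using assms(1) coprime_sum_squares[of x y] unfolding prim_two_squares_def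
    by (simp add: coprime_commute)
  then have "coprime M x"
    using M by simp
  have r: "r * of_int M = 1"
    using \<open>M \<noteq> 0\<close> by (simp add: r_def)
  have ab: "a * a = r * of_int (x * x)" "a * b = r * of_int (x * y)" "b * b = r * of_int (y * y)"
    unfolding a_def b_def r_def M_def by (simp_all add: divide_inverse power2_eq_square mult_ac)
  then have ab': "a * (a * q) = r * of_int (x * x) * q" "a * (b * q) = r * of_int (x * y) * q"
    "b * (b * q) = r * of_int (y * y) * q" for q
    by (simp_all flip: mult.assoc)
  have "P$1$1 = r * of_int (x * x * A + 2 * (x * y) * B + y * y * C)"
    unfolding P_def congruence_orth_mat2_sym2_nth power2_eq_square
    by (simp add: ab' algebra_simps)
  also have "x * x * A + 2 * (x * y) * B + y * y * C = x * K + C * M"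
    unfolding K_def M[symmetric] by (simp add: power2_eq_square algebra_simps)
  finally have P11: "P$1$1 = r * of_int (x * K) + of_int C"
    using r by (simp add: algebra_simps)
  have "P$1$2 = e * (r * of_int (- (x * y) * A + (x * x - y * y) * B + x * y * C))"
    unfolding P_def congruence_orth_mat2_sym2_nth power2_eq_square
    by (simp add: ab' algebra_simps)
  also have "- (x * y) * A + (x * x - y * y) * B + x * y * C = B * M - y * K"
    unfolding K_def M[symmetric] by (simp add: power2_eq_square algebra_simps)
  finally have P12: "P$1$2 = e * (of_int B - r * of_int (y * K))"
    using r by (simp add: algebra_simps)
  have "P$2$2 = e\<^sup>2 * (r * of_int (y * y * A - 2 * (x * y) * B + x * x * C))"
    unfolding P_def congruence_orth_mat2_sym2_nth power2_eq_square[of a] power2_eq_square[of b]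
    by (simp add: ab' algebra_simps)
  also have "y * y * A - 2 * (x * y) * B + x * x * C = A * M - x * K"
    unfolding K_def M[symmetric] by (simp add: power2_eq_square algebra_simps)
  finally have P22: "P$2$2 = of_int A - r * of_int (x * K)"
    using r assms(3) by (auto simp: algebra_simps)
  have P21: "P$2$1 = P$1$2"
    unfolding P_def congruence_orth_mat2_sym2_nth ..
  have e: "e * q \<in> \<int> \<longleftrightarrow> q \<in> \<int>" for q :: rat
    using assms(3) by auto
  have Z: "r * of_int n \<in> \<int> \<longleftrightarrow> M dvd n" for n
    using \<open>M \<noteq> 0\<close> of_int_div_of_int_in_Ints_iff[of n M, where 'a = rat]
    by (simp add: r_def divide_inverse mult.commute)
  have "is_int_mat P \<longleftrightarrow> P$1$1 \<in> \<int> \<and> P$1$2 \<in> \<int> \<and> P$2$1 \<in> \<int> \<and> P$2$2 \<in> \<int>"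
    unfolding is_int_mat_def by (auto simp: forall_2)
  also have "\<dots> \<longleftrightarrow> M dvd x * K \<and> M dvd y * K"
    unfolding P21 P11 P12 P22 e by (auto simp: Z simp del: of_int_mult)
  also have "\<dots> \<longleftrightarrow> M dvd K"
    using \<open>coprime M x\<close> by (auto simp: coprime_dvd_mult_right_iff)
  finally show ?thesis
    unfolding P_def a_def b_def M_def K_def orth_of_rep_def .
qed

lemma card_linear_congruence_solutions:
  fixes x M k :: int
  assumes "coprime x M" "M > 0"
  shows "card {a \<in> {0..<M}. M dvd x * a + k} = 1"
proof -
  obtain u where "[x * u = 1] (mod M)"
    using cong_solve_coprime_int[OF assms(1)] by blast
  then have inv: "M dvd x * u - 1"
    by (simp add: cong_iff_dvd_diff)
  have "M dvd x * a + k \<longleftrightarrow> a mod M = (- k * u) mod M" for a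
    unfolding mod_eq_dvd_iff
  proof
    assume "M dvd x * a + k"
    then have "M dvd u * (x * a + k) - a * (x * u - 1)"
      using inv by (simp add: dvd_diff)
    also have "u * (x * a + k) - a * (x * u - 1) = a - (- k * u)"
      by (simp add: algebra_simps)
    finally show "M dvd a - (- k * u)" .
  next
    assume "M dvd a - (- k * u)"
    then have "M dvd x * (a - (- k * u)) - k * (x * u - 1)"
      using inv by (simp add: dvd_diff)
    also have "x * (a - (- k * u)) - k * (x * u - 1) = x * a + k"
      by (simp add: algebra_simps)
    finally show "M dvd x * a + k" .
  qed
  then have "{a \<in> {0..<M}. M dvd x * a + k} = {a \<in> {0..<M}. a mod M = (- k * u) mod M}"
    by simp
  also have "\<dots> = {(- k * u) mod M}"
    using assms(2) by auto
  finally show ?thesis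
    by simp
qed

lemma sum_indicator_congruence_orth_of_rep:
  assumes "(x, y) \<in> prim_two_squares (int l ^ 2)" "l \<ge> 1" "e \<in> {1, -1}"
  defines "S \<equiv> {0..<int l ^ 2}"
  shows "(\<Sum>A\<in>S. \<Sum>B\<in>S. \<Sum>C\<in>S. of_bool (is_int_mat (transpose (orth_of_rep l x y e)
            ** int_to_rat_mat (sym2 A B C) ** orth_of_rep l x y e)) :: real) = real l ^ 4"
proof -
  have "coprime x (int l ^ 2)"
    using assms(1) coprime_sum_squares[of x y] unfolding prim_two_squares_def by simp
  then have one: "card {A \<in> S. int l ^ 2 dvd x * A + k} = 1" for k
    unfolding S_def using assms(2) by (intro card_linear_congruence_solutions) simp_all
  have "(\<Sum>A\<in>S. \<Sum>B\<in>S. \<Sum>C\<in>S. of_bool (int l ^ 2 dvd x * (A - C) + 2 * y * B) :: real)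
      = (\<Sum>B\<in>S. \<Sum>C\<in>S. \<Sum>A\<in>S. of_bool (int l ^ 2 dvd x * A + (2 * y * B - x * C)))"
    by (subst sum.swap, rule sum.cong[OF refl], subst sum.swap) (simp add: algebra_simps)
  also have "\<dots> = (\<Sum>B\<in>S. \<Sum>C\<in>S. 1)"
    using one by (simp add: S_def Collect_conj_eq[symmetric] Int_def)
  also have "\<dots> = real l ^ 4"
    by (simp add: S_def power_mult[symmetric])
  finally show ?thesis
    using is_int_mat_congruence_orth_of_rep_iff[OF assms(1-3)] by simp
qed

lemma expected_N2_eq:
  assumes "l \<ge> 1"
  shows "expected_N2 l = card (O2 l) / real l ^ 2"
proof -
  define S where "S = {0..<int l ^ 2}"
  define I where
    "I (Q :: rat^2^2) A B C \<longleftrightarrow> is_int_mat (transpose Q ** int_to_rat_mat (sym2 A B C) ** Q)"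
    for Q A B C
  have "finite (O2 l)"
    using assms by (rule finite_O2)
  then have N2: "real (N2 l (sym2 A B C)) = (\<Sum>Q\<in>O2 l. of_bool (I Q A B C))" for A B C
    unfolding N2_def I_def by (simp add: Collect_conj_eq Int_commute)
  have inner: "(\<Sum>A\<in>S. \<Sum>B\<in>S. \<Sum>C\<in>S. of_bool (I Q A B C) :: real) = real l ^ 4" if "Q \<in> O2 l" for Q
  proof -
    have "Q \<in> (\<lambda>((x, y), e). orth_of_rep l x y e) ` (prim_two_squares (int l ^ 2) \<times> {1, -1})"
      using bij_betw_imp_surj_on[OF bij_betw_orth_of_rep[OF assms]] that by simp
    then obtain x y e where xy: "(x, y) \<in> prim_two_squares (int l ^ 2)" and e: "e \<in> {1, -1}"
      and Q: "Q = orth_of_rep l x y e"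
      by auto
    show ?thesis
      using sum_indicator_congruence_orth_of_rep[OF xy assms e] unfolding I_def S_def Q .
  qed
  have "(\<Sum>A\<in>S. \<Sum>B\<in>S. \<Sum>C\<in>S. real (N2 l (sym2 A B C)))
      = (\<Sum>Q\<in>O2 l. \<Sum>A\<in>S. \<Sum>B\<in>S. \<Sum>C\<in>S. of_bool (I Q A B C))"
    unfolding N2 by (simp only: sum.swap[of _ "O2 l"])
  also have "\<dots> = card (O2 l) * real l ^ 4"
    using inner by simp
  finally have "expected_N2 l = card (O2 l) * real l ^ 4 / real l ^ 6"
    unfolding expected_N2_def S_def by simp
  also have "\<dots> = card (O2 l) * real l ^ 4 / (real l ^ 2 * real l ^ 4)"
    by (simp flip: power_add)
  also have "\<dots> = card (O2 l) / real l ^ 2"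
    by (rule nonzero_mult_divide_mult_cancel_right) (use assms in simp)
  finally show ?thesis .
qed

theorem theorem1p6:
  fixes l :: nat
  assumes "l \<ge> 2"
  shows "(O2 l \<noteq> {} \<longleftrightarrow> (\<forall>p\<in>prime_factors l. p mod 4 = 1))
    \<and> ((\<forall>p\<in>prime_factors l. p mod 4 = 1) \<longrightarrow>
         card (O2 l) = 2 ^ (card (prime_factors l) + 3)
       \<and> expected_N2 l = 2 ^ (card (prime_factors l) + 3) / real l ^ 2)"
proof -
  have l: "l \<ge> 1"
    using assms by simp
  have card: "card (O2 l) = 8 * card (sqrts_minus_one (int l ^ 2))"
    using l by (rule card_O2)
  have "O2 l \<noteq> {} \<longleftrightarrow> sqrts_minus_one (int l ^ 2) \<noteq> {}"
    using card finite_O2[OF l] by auto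
  also have "\<dots> \<longleftrightarrow> (\<forall>p\<in>prime_factors l. p mod 4 = 1)"
    using l by (simp add: sqrts_minus_one_square_nonempty_iff)
  finally have nonempty: "O2 l \<noteq> {} \<longleftrightarrow> (\<forall>p\<in>prime_factors l. p mod 4 = 1)" .
  have "card (O2 l) = 2 ^ (card (prime_factors l) + 3)"
    if "\<forall>p\<in>prime_factors l. p mod 4 = 1"
    using card card_sqrts_minus_one[of "l ^ 2"] that l by (simp add: prime_factors_power power_add)
  then show ?thesis
    using nonempty expected_N2_eq[OF l] by simp
qed

end
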